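(* Let $R$ be a ring with identity and $a,b,c\in R$. Then: (i) $a$ is $(b,c)$-invertible if and only if $a$ is both left and right $(b,c)$-invertible; (ii) $a$ is $(b,c)$-invertible if and only if $b$ and $c$ are regular and $a$ is both left annihilator and right annihilator $(b,c)$-invertible.
   Context: An element $x$ is regular if $x=xzx$ for some $z\in R$. For $x\in R$: $xR=\{xr:r\in R\}$, $Rx=\{rx:r\in R\}$, $x^\circ=\{r: xr=0\}$, ${}^\circ x=\{r: rx=0\}$. $a$ is $(b,c)$-invertible if there is $y\in R$ with $y\in (bRy)\cap(yRc)$, $yab=b$ and $cay=c$. $a$ is left $(b,c)$-invertible if there is $y$ with $Ry\subseteq Rc$ and $yab=b$; right $(b,c)$-invertible if there is $y$ with $yR\subseteq bR$ and $cay=c$; right annihilator $(b,c)$-invertible if there is $y$ with $c^\circ\subseteq y^\circ$ and $yab=b$; left annihilator $(b,c)$-invertible if there is $y$ with ${}^\circ b\subseteq {}^\circ y$ and $cay=c$. *)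

theory Defs
  imports Main
begin

definition regular :: "'a::ring_1 \<Rightarrow> bool" where
  "regular x \<longleftrightarrow> (\<exists>z. x = x * z * x)"

definition rprinc :: "'a::ring_1 \<Rightarrow> 'a set" where
  "rprinc x = {x * r | r. True}"

definition lprinc :: "'a::ring_1 \<Rightarrow> 'a set" where
  "lprinc x = {r * x | r. True}"

definition rann :: "'a::ring_1 \<Rightarrow> 'a set" where
  "rann x = {r. x * r = 0}"

definition lann :: "'a::ring_1 \<Rightarrow> 'a set" where
  "lann x = {r. r * x = 0}"

definition bc_invertible :: "'a::ring_1 \<Rightarrow> 'a \<Rightarrow> 'a \<Rightarrow> bool" where
  "bc_invertible a b c \<longleftrightarrow>
     (\<exists>y. y \<in> {b * r * y | r. True} \<inter> {y * r * c | r. True} \<and> y * a * b = b \<and> c * a * y = c)"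

definition left_bc_invertible :: "'a::ring_1 \<Rightarrow> 'a \<Rightarrow> 'a \<Rightarrow> bool" where
  "left_bc_invertible a b c \<longleftrightarrow> (\<exists>y. lprinc y \<subseteq> lprinc c \<and> y * a * b = b)"

definition right_bc_invertible :: "'a::ring_1 \<Rightarrow> 'a \<Rightarrow> 'a \<Rightarrow> bool" where
  "right_bc_invertible a b c \<longleftrightarrow> (\<exists>y. rprinc y \<subseteq> rprinc b \<and> c * a * y = c)"

definition rann_bc_invertible :: "'a::ring_1 \<Rightarrow> 'a \<Rightarrow> 'a \<Rightarrow> bool" where
  "rann_bc_invertible a b c \<longleftrightarrow> (\<exists>y. rann c \<subseteq> rann y \<and> y * a * b = b)"

definition lann_bc_invertible :: "'a::ring_1 \<Rightarrow> 'a \<Rightarrow> 'a \<Rightarrow> bool" where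
  "lann_bc_invertible a b c \<longleftrightarrow> (\<exists>y. lann b \<subseteq> lann y \<and> c * a * y = c)"

end

theory Submission
  imports Defs
begin

(*
  A left witness y1 in Rc and a right witness y2 in bR of (b,c)-invertibility coincide,
  exactly as a left and a right inverse do: y1 = y1 a y2 = y2. The common value is the
  (b,c)-inverse, and the conditions y in bRy and y in yRc follow from y = y a y.
  For regular b and c, containment of annihilators is the same as containment of principal
  one-sided ideals (if c = cwc then 1 - wc annihilates c from the right, so if every right
  annihilator of c annihilates y, then y = ywc), which reduces (ii) to (i).
*)

lemma lprinc_subset_iff: "lprinc y \<subseteq> lprinc c \<longleftrightarrow> y \<in> lprinc c"
  for y c :: "'a::ring_1"
proof
  assume "lprinc y \<subseteq> lprinc c"
  moreover have "y \<in> lprinc y" unfolding lprinc_def by (auto intro: exI[of _ 1])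
  ultimately show "y \<in> lprinc c" by blast
next
  assume "y \<in> lprinc c"
  then show "lprinc y \<subseteq> lprinc c" unfolding lprinc_def by (auto simp: mult.assoc[symmetric])
qed

lemma rprinc_subset_iff: "rprinc y \<subseteq> rprinc b \<longleftrightarrow> y \<in> rprinc b"
  for y b :: "'a::ring_1"
proof
  assume "rprinc y \<subseteq> rprinc b"
  moreover have "y \<in> rprinc y" unfolding rprinc_def by (auto intro: exI[of _ 1])
  ultimately show "y \<in> rprinc b" by blast
next
  assume "y \<in> rprinc b"
  then show "rprinc y \<subseteq> rprinc b" unfolding rprinc_def by (auto simp: mult.assoc)
qed

lemma rann_subset_iff_lprinc:
  fixes y c :: "'a::ring_1"
  assumes "regular c"
  shows "rann c \<subseteq> rann y \<longleftrightarrow> y \<in> lprinc c"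
proof
  obtain w where w: "c = c * w * c" using assms unfolding regular_def by blast
  assume "rann c \<subseteq> rann y"
  moreover have "c * (1 - w * c) = 0"
    using w by (simp add: right_diff_distrib mult.assoc[symmetric])
  ultimately have "y * (1 - w * c) = 0" unfolding rann_def by blast
  then have "y = (y * w) * c" by (simp add: right_diff_distrib mult.assoc)
  then show "y \<in> lprinc c" unfolding lprinc_def by blast
next
  assume "y \<in> lprinc c"
  then show "rann c \<subseteq> rann y" unfolding lprinc_def rann_def by (auto simp: mult.assoc)
qed

lemma lann_subset_iff_rprinc:
  fixes y b :: "'a::ring_1"
  assumes "regular b"
  shows "lann b \<subseteq> lann y \<longleftrightarrow> y \<in> rprinc b"
proof
  obtain z where z: "b = b * z * b" using assms unfolding regular_def by blast
  assume "lann b \<subseteq> lann y"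
  moreover have "(1 - b * z) * b = 0"
    using z by (simp add: left_diff_distrib)
  ultimately have "(1 - b * z) * y = 0" unfolding lann_def by blast
  then have "y = b * (z * y)" by (simp add: left_diff_distrib mult.assoc)
  then show "y \<in> rprinc b" unfolding rprinc_def by blast
next
  assume "y \<in> rprinc b"
  then show "lann b \<subseteq> lann y" unfolding rprinc_def lann_def by (auto simp: mult.assoc[symmetric])
qed

lemma bc_witnesses_eq:
  fixes a b c y\<^sub>1 y\<^sub>2 :: "'a::ring_1"
  assumes "y\<^sub>1 \<in> lprinc c" "y\<^sub>1 * a * b = b" and "y\<^sub>2 \<in> rprinc b" "c * a * y\<^sub>2 = c"
  shows "y\<^sub>1 = y\<^sub>2"
proof -
  obtain t where t: "y\<^sub>1 = t * c" using assms(1) unfolding lprinc_def by blast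
  obtain u where u: "y\<^sub>2 = b * u" using assms(3) unfolding rprinc_def by blast
  have "y\<^sub>1 = t * (c * a * y\<^sub>2)" using t assms(4) by simp
  also have "\<dots> = (y\<^sub>1 * a * b) * u" using t u by (simp add: mult.assoc)
  also have "\<dots> = y\<^sub>2" using u assms(2) by simp
  finally show ?thesis .
qed

lemma bc_invertible_iff:
  "bc_invertible a b c \<longleftrightarrow>
     (\<exists>y. y \<in> rprinc b \<and> y \<in> lprinc c \<and> y * a * b = b \<and> c * a * y = c)"
  for a b c :: "'a::ring_1"
proof
  assume "bc_invertible a b c"
  then obtain y r s where y: "y = b * r * y" "y = y * s * c" "y * a * b = b" "c * a * y = c"
    unfolding bc_invertible_def by blast
  have "y = b * (r * y)" "y = (y * s) * c" using y(1,2) by (simp_all only: mult.assoc)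
  then have "y \<in> rprinc b" "y \<in> lprinc c" unfolding rprinc_def lprinc_def by blast+
  then show "\<exists>y. y \<in> rprinc b \<and> y \<in> lprinc c \<and> y * a * b = b \<and> c * a * y = c"
    using y(3,4) by blast
next
  assume "\<exists>y. y \<in> rprinc b \<and> y \<in> lprinc c \<and> y * a * b = b \<and> c * a * y = c"
  then obtain y t u where y: "y = b * u" "y = t * c" "y * a * b = b" "c * a * y = c"
    unfolding rprinc_def lprinc_def by blast
  have idem: "y = y * a * y"
  proof -
    have "y = t * (c * a * y)" using y(2,4) by simp
    then show ?thesis using y(2) by (simp add: mult.assoc)
  qed
  have "y = b * (u * a) * y" using idem y(1) by (simp add: mult.assoc)
  moreover have "y = y * (a * t) * c" using idem y(2) by (simp add: mult.assoc)
  ultimately show "bc_invertible a b c" unfolding bc_invertible_def using y(3,4) by blast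
qed

lemma bc_invertible_iff_left_right:
  "bc_invertible a b c \<longleftrightarrow> left_bc_invertible a b c \<and> right_bc_invertible a b c"
  for a b c :: "'a::ring_1"
proof
  assume "bc_invertible a b c"
  then show "left_bc_invertible a b c \<and> right_bc_invertible a b c"
    unfolding bc_invertible_iff left_bc_invertible_def right_bc_invertible_def
      lprinc_subset_iff rprinc_subset_iff by blast
next
  assume "left_bc_invertible a b c \<and> right_bc_invertible a b c"
  then obtain y\<^sub>1 y\<^sub>2 where "y\<^sub>1 \<in> lprinc c" "y\<^sub>1 * a * b = b" "y\<^sub>2 \<in> rprinc b" "c * a * y\<^sub>2 = c"
    unfolding left_bc_invertible_def right_bc_invertible_def
      lprinc_subset_iff rprinc_subset_iff by blast
  moreover from this have "y\<^sub>1 = y\<^sub>2" by (rule bc_witnesses_eq)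
  ultimately show "bc_invertible a b c" unfolding bc_invertible_iff by blast
qed

lemma bc_invertible_imp_regular:
  fixes a b c :: "'a::ring_1"
  assumes "bc_invertible a b c"
  shows "regular b" and "regular c"
proof -
  obtain y where y: "y \<in> rprinc b" "y \<in> lprinc c" "y * a * b = b" "c * a * y = c"
    using assms unfolding bc_invertible_iff by blast
  obtain u where u: "y = b * u" using y(1) unfolding rprinc_def by blast
  obtain t where t: "y = t * c" using y(2) unfolding lprinc_def by blast
  have "b = b * (u * a) * b" using y(3) u by (simp add: mult.assoc)
  then show "regular b" unfolding regular_def by blast
  have "c = c * (a * t) * c" using y(4) t by (simp add: mult.assoc)
  then show "regular c" unfolding regular_def by blast
qed

lemma rann_bc_invertible_iff_left:
  "regular c \<Longrightarrow> rann_bc_invertible a b c \<longleftrightarrow> left_bc_invertible a b c"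
  for a b c :: "'a::ring_1"
  unfolding rann_bc_invertible_def left_bc_invertible_def
  by (simp add: rann_subset_iff_lprinc lprinc_subset_iff)

lemma lann_bc_invertible_iff_right:
  "regular b \<Longrightarrow> lann_bc_invertible a b c \<longleftrightarrow> right_bc_invertible a b c"
  for a b c :: "'a::ring_1"
  unfolding lann_bc_invertible_def right_bc_invertible_def
  by (simp add: lann_subset_iff_rprinc rprinc_subset_iff)

theorem corollary2p7:
  fixes a b c :: "'a::ring_1"
  shows "(bc_invertible a b c \<longleftrightarrow> left_bc_invertible a b c \<and> right_bc_invertible a b c)
       \<and> (bc_invertible a b c \<longleftrightarrow> regular b \<and> regular c \<and>
            lann_bc_invertible a b c \<and> rann_bc_invertible a b c)"
  using bc_invertible_iff_left_right[of a b c] bc_invertible_imp_regular[of a b c]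
    rann_bc_invertible_iff_left[of c a b] lann_bc_invertible_iff_right[of b a c]
  by blast

end
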